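(* Let $G=(V,E)$ be a finite simple connected graph, and let $T(G)$ be the largest $t$ such that $G$ contains a $t$-tuplet. Then $IDI(G)\ge T(G)$.
   Context: For a graph $G=(V,E)$, a set $S\subseteq V$ with $|S|=t\ge 2$ is a $t$-tuplet if either $S$ is an independent set and any two vertices of $S$ have the same (open) neighborhood, or $S$ is a clique and any two vertices of $S$ have the same closed neighborhood $N(v)\cup\{v\}$. For $G$ with diameter $d$, a rank assignment is a function $f:V\to\mathbb{R}$; under $f$, the string of a vertex $v$ is the $d$-vector whose $i$-th coordinate is the sum of $f(w)$ over all vertices $w$ with $d(v,w)=i$. The ID-index $IDI(G)$ is the minimum $k$ such that there exists $f:V\to\mathbb{R}$ with $|f(V)|=k$ under which all vertices have distinct strings. *)

theory Defs
  imports Complex_Main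
begin

definition simple_graph :: "'a set \<Rightarrow> ('a \<Rightarrow> 'a \<Rightarrow> bool) \<Rightarrow> bool" where
  "simple_graph V E \<longleftrightarrow> finite V \<and> (\<forall>u v. E u v \<longrightarrow> u \<in> V \<and> v \<in> V)
     \<and> (\<forall>u v. E u v \<longrightarrow> E v u) \<and> (\<forall>v. \<not> E v v)"

definition is_walk :: "'a set \<Rightarrow> ('a \<Rightarrow> 'a \<Rightarrow> bool) \<Rightarrow> 'a \<Rightarrow> 'a \<Rightarrow> nat \<Rightarrow> bool" where
  "is_walk V E u v n \<longleftrightarrow> (\<exists>xs. length xs = Suc n \<and> hd xs = u \<and> last xs = v
      \<and> set xs \<subseteq> V \<and> (\<forall>i<n. E (xs ! i) (xs ! Suc i)))"

definition connected_graph :: "'a set \<Rightarrow> ('a \<Rightarrow> 'a \<Rightarrow> bool) \<Rightarrow> bool" where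
  "connected_graph V E \<longleftrightarrow> (\<forall>u\<in>V. \<forall>v\<in>V. \<exists>n. is_walk V E u v n)"

definition gdist :: "'a set \<Rightarrow> ('a \<Rightarrow> 'a \<Rightarrow> bool) \<Rightarrow> 'a \<Rightarrow> 'a \<Rightarrow> nat" where
  "gdist V E u v = (LEAST n. is_walk V E u v n)"

definition diameter :: "'a set \<Rightarrow> ('a \<Rightarrow> 'a \<Rightarrow> bool) \<Rightarrow> nat" where
  "diameter V E = Max ({gdist V E u v | u v. u \<in> V \<and> v \<in> V} \<union> {0})"

definition vstring :: "'a set \<Rightarrow> ('a \<Rightarrow> 'a \<Rightarrow> bool) \<Rightarrow> ('a \<Rightarrow> real) \<Rightarrow> 'a \<Rightarrow> real list" where
  "vstring V E f v = map (\<lambda>i. \<Sum>w\<in>{w\<in>V. gdist V E v w = i}. f w) [1..<Suc (diameter V E)]"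

definition IDI :: "'a set \<Rightarrow> ('a \<Rightarrow> 'a \<Rightarrow> bool) \<Rightarrow> nat" where
  "IDI V E = (LEAST k. \<exists>f :: 'a \<Rightarrow> real. card (f ` V) = k \<and> inj_on (vstring V E f) V)"

definition nbhd :: "'a set \<Rightarrow> ('a \<Rightarrow> 'a \<Rightarrow> bool) \<Rightarrow> 'a \<Rightarrow> 'a set" where
  "nbhd V E v = {w \<in> V. E v w}"

definition is_tuplet :: "'a set \<Rightarrow> ('a \<Rightarrow> 'a \<Rightarrow> bool) \<Rightarrow> 'a set \<Rightarrow> bool" where
  "is_tuplet V E S \<longleftrightarrow> S \<subseteq> V \<and> finite S \<and> card S \<ge> 2 \<and>
     ((\<forall>x\<in>S. \<forall>y\<in>S. \<not> E x y \<and> nbhd V E x = nbhd V E y)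
      \<or> (\<forall>x\<in>S. \<forall>y\<in>S. (x \<noteq> y \<longrightarrow> E x y) \<and> insert x (nbhd V E x) = insert y (nbhd V E y)))"

definition max_tuplet :: "'a set \<Rightarrow> ('a \<Rightarrow> 'a \<Rightarrow> bool) \<Rightarrow> nat" where
  "max_tuplet V E = Max (insert 0 {card S | S. is_tuplet V E S})"

end

theory Submission
  imports Defs "HOL-Library.Nat_Bijection" "HOL-Combinatorics.Transposition"
begin

text \<open>Two distinct members x, y of a tuplet are at the same distance from every third vertex:
every neighbour of x other than y is a neighbour of y, so a shortest walk leaving x can be
rerouted to leave y instead. Hence the transposition of x and y maps the spheres around x onto
the spheres around y; if a rank assignment gave x and y the same rank, it would give them the
same string. So every resolving rank assignment is injective on each tuplet and uses at least
T(G) ranks. Resolving assignments exist (ranks 2^i along an enumeration of V make all subset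
sums distinct), so IDI(G) is attained and the bound follows.\<close>

lemma is_walk_rev:
  assumes "simple_graph V E" and "is_walk V E u v n"
  shows "is_walk V E v u n"
proof -
  obtain xs where xs: "length xs = Suc n" "hd xs = u" "last xs = v" "set xs \<subseteq> V"
    and steps: "\<forall>i<n. E (xs ! i) (xs ! Suc i)"
    using assms(2) unfolding is_walk_def by blast
  have "E (rev xs ! i) (rev xs ! Suc i)" if "i < n" for i
  proof -
    have "E (xs ! Suc (n - Suc i)) (xs ! (n - Suc i))"
      using steps that assms(1) unfolding simple_graph_def by auto
    moreover have "Suc (n - Suc i) = n - i" using that by simp
    ultimately show ?thesis using that xs(1) by (simp add: rev_nth)
  qed
  moreover have "xs \<noteq> []" using xs(1) by auto
  ultimately show ?thesis
    unfolding is_walk_def using xs by (intro exI[of _ "rev xs"]) (auto simp: hd_rev last_rev)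
qed

lemma gdist_le: "is_walk V E u v n \<Longrightarrow> gdist V E u v \<le> n"
  unfolding gdist_def by (rule Least_le)

lemma is_walk_gdist:
  "connected_graph V E \<Longrightarrow> u \<in> V \<Longrightarrow> v \<in> V \<Longrightarrow> is_walk V E u v (gdist V E u v)"
  unfolding gdist_def connected_graph_def by (meson LeastI_ex)

lemma gdist_commute:
  assumes "simple_graph V E" "connected_graph V E" "u \<in> V" "v \<in> V"
  shows "gdist V E u v = gdist V E v u"
  by (meson assms gdist_le is_walk_gdist le_antisym is_walk_rev)

lemma gdist_self: "x \<in> V \<Longrightarrow> gdist V E x x = 0"
  using gdist_le[of V E x x 0] unfolding is_walk_def by (fastforce intro: exI[of _ "[x]"])

lemma gdist_eq_0_iff:
  assumes "connected_graph V E" "u \<in> V" "v \<in> V"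
  shows "gdist V E u v = 0 \<longleftrightarrow> u = v"
proof
  assume "gdist V E u v = 0"
  then obtain xs where "length xs = 1" "hd xs = u" "last xs = v"
    using is_walk_gdist[OF assms] unfolding is_walk_def by auto
  then show "u = v" by (cases xs) auto
qed (simp add: assms(3) gdist_self)

lemma gdist_le_diameter:
  assumes "finite V" "u \<in> V" "v \<in> V"
  shows "gdist V E u v \<le> diameter V E"
proof -
  have "{gdist V E u v | u v. u \<in> V \<and> v \<in> V} = (\<lambda>(u, v). gdist V E u v) ` (V \<times> V)" by auto
  then have "finite {gdist V E u v | u v. u \<in> V \<and> v \<in> V}" using assms(1) by simp
  then show ?thesis unfolding diameter_def using assms(2,3) by (intro Max_ge) auto
qed

lemma is_walk_reroute_start:
  assumes walk: "is_walk V E x w n" and "w \<noteq> x" "y \<in> V"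
    and nbrs: "\<And>z. E x z \<Longrightarrow> z = y \<or> E y z"
  shows "\<exists>m\<le>n. is_walk V E y w m"
proof -
  obtain xs where xs: "length xs = Suc n" "hd xs = x" "last xs = w" "set xs \<subseteq> V"
    and steps: "\<forall>i<n. E (xs ! i) (xs ! Suc i)"
    using walk unfolding is_walk_def by blast
  obtain k where n: "n = Suc k"
    using xs \<open>w \<noteq> x\<close> by (cases n; cases xs) auto
  obtain z zs where xs_eq: "xs = x # z # zs"
    using xs(1,2) n by (cases xs; cases "tl xs") auto
  have tail: "is_walk V E z w k"
    unfolding is_walk_def using xs steps n xs_eq by (intro exI[of _ "z # zs"]) auto
  have "E x z" using steps n xs_eq by fastforce
  then consider "z = y" | "E y z" using nbrs by blast
  then show ?thesis
  proof cases
    case 1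
    then show ?thesis using tail n by (intro exI[of _ k]) auto
  next
    case 2
    have "is_walk V E y w n"
      unfolding is_walk_def
    proof (intro exI[of _ "y # z # zs"] conjI allI impI)
      fix i assume "i < n"
      then show "E ((y # z # zs) ! i) ((y # z # zs) ! Suc i)"
        using 2 steps xs_eq by (cases i) auto
    qed (use xs xs_eq \<open>y \<in> V\<close> in auto)
    then show ?thesis by auto
  qed
qed

lemma tuplet_neighbour:
  assumes "simple_graph V E" "is_tuplet V E S" "x \<in> S" "y \<in> S" "E x z"
  shows "z = y \<or> E y z"
proof -
  have "z \<in> nbhd V E x" using assms(1,5) unfolding simple_graph_def nbhd_def by blast
  moreover have "nbhd V E x = nbhd V E y \<or> insert x (nbhd V E x) = insert y (nbhd V E y)"
    using assms(2-4) unfolding is_tuplet_def by blast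
  moreover have "z \<noteq> x" using assms(1,5) unfolding simple_graph_def by blast
  ultimately show ?thesis unfolding nbhd_def by blast
qed

lemma tuplet_gdist_eq:
  assumes sg: "simple_graph V E" and cg: "connected_graph V E" and S: "is_tuplet V E S"
    and "x \<in> S" "y \<in> S" "w \<in> V" "w \<noteq> x" "w \<noteq> y"
  shows "gdist V E x w = gdist V E y w"
proof -
  have le: "gdist V E b w \<le> gdist V E a w" if ab: "a \<in> S" "b \<in> S" and "w \<noteq> a" for a b
  proof -
    have "a \<in> V" "b \<in> V" using S ab unfolding is_tuplet_def by auto
    then obtain m where "m \<le> gdist V E a w" "is_walk V E b w m"
      using is_walk_reroute_start[OF is_walk_gdist[OF cg \<open>a \<in> V\<close> \<open>w \<in> V\<close>] \<open>w \<noteq> a\<close>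
          \<open>b \<in> V\<close> tuplet_neighbour[OF sg S ab]]
      by blast
    then show ?thesis using gdist_le[of V E b w m] by linarith
  qed
  show ?thesis using le[OF \<open>y \<in> S\<close> \<open>x \<in> S\<close> \<open>w \<noteq> y\<close>] le[OF \<open>x \<in> S\<close> \<open>y \<in> S\<close> \<open>w \<noteq> x\<close>]
    by (rule antisym)
qed

lemma tuplet_gdist_transpose:
  assumes "simple_graph V E" "connected_graph V E" "is_tuplet V E S"
    and "x \<in> S" "y \<in> S" "w \<in> V"
  shows "gdist V E y (Transposition.transpose x y w) = gdist V E x w"
proof -
  have "x \<in> V" "y \<in> V" using assms(3-5) unfolding is_tuplet_def by auto
  consider "w = x" | "w = y" | "w \<noteq> x" "w \<noteq> y" by blast
  then show ?thesis
  proof cases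
    case 1
    then show ?thesis using \<open>x \<in> V\<close> \<open>y \<in> V\<close> by (simp add: gdist_self)
  next
    case 2
    then show ?thesis using gdist_commute[OF assms(1,2) \<open>x \<in> V\<close> \<open>y \<in> V\<close>] by simp
  next
    case 3
    then show ?thesis using tuplet_gdist_eq[OF assms] by simp
  qed
qed

lemma vstring_eq_if_gdist_preserving_bij:
  assumes "bij_betw \<sigma> V V" "\<And>w. w \<in> V \<Longrightarrow> f (\<sigma> w) = f w"
    and "\<And>w. w \<in> V \<Longrightarrow> gdist V E y (\<sigma> w) = gdist V E x w"
  shows "vstring V E f x = vstring V E f y"
proof -
  have "(\<Sum>w\<in>{w\<in>V. gdist V E x w = i}. f w) = (\<Sum>w\<in>{w\<in>V. gdist V E y w = i}. f w)" for i
  proof -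
    have "\<sigma> ` {w\<in>V. gdist V E x w = i} = {w\<in>V. gdist V E y w = i}"
    proof (intro equalityI subsetI)
      fix v assume "v \<in> {w\<in>V. gdist V E y w = i}"
      moreover obtain w where "w \<in> V" "v = \<sigma> w"
        using assms(1) calculation unfolding bij_betw_def by blast
      ultimately show "v \<in> \<sigma> ` {w\<in>V. gdist V E x w = i}" using assms(3) by auto
    qed (use assms(3) bij_betw_apply[OF assms(1)] in auto)
    moreover have "inj_on \<sigma> {w\<in>V. gdist V E x w = i}"
      using assms(1) unfolding bij_betw_def by (auto intro: inj_on_subset)
    ultimately have "(\<Sum>w\<in>{w\<in>V. gdist V E y w = i}. f w)
        = (\<Sum>w\<in>{w\<in>V. gdist V E x w = i}. f (\<sigma> w))"
      by (metis (no_types, lifting) comp_apply sum.reindex_cong)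
    also have "\<dots> = (\<Sum>w\<in>{w\<in>V. gdist V E x w = i}. f w)"
      using assms(2) by (intro sum.cong) auto
    finally show ?thesis by (rule sym)
  qed
  then show ?thesis unfolding vstring_def by simp
qed

lemma resolving_inj_on_tuplet:
  assumes "simple_graph V E" "connected_graph V E" "is_tuplet V E S"
    and resolving: "inj_on (vstring V E f) V"
  shows "inj_on f S"
proof (rule inj_onI)
  fix x y assume "x \<in> S" "y \<in> S" "f x = f y"
  then have "x \<in> V" "y \<in> V" using assms(3) unfolding is_tuplet_def by auto
  have "vstring V E f x = vstring V E f y"
  proof (rule vstring_eq_if_gdist_preserving_bij)
    show "bij_betw (Transposition.transpose x y) V V"
      using \<open>x \<in> V\<close> \<open>y \<in> V\<close> by (simp add: bij_betw_transpose_iff)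
    show "f (Transposition.transpose x y w) = f w" for w
      using \<open>f x = f y\<close> by (simp add: transpose_def)
  qed (rule tuplet_gdist_transpose[OF assms(1-3) \<open>x \<in> S\<close> \<open>y \<in> S\<close>])
  then show "x = y" using inj_onD[OF resolving] \<open>x \<in> V\<close> \<open>y \<in> V\<close> by blast
qed

lemma vstring_inj_if_subset_sums_distinct:
  assumes "finite V" "connected_graph V E" and sums: "inj_on (sum f) (Pow V)"
  shows "inj_on (vstring V E f) V"
proof (rule inj_onI, rule ccontr)
  fix x y assume "x \<in> V" "y \<in> V" "vstring V E f x = vstring V E f y" "x \<noteq> y"
  define i where "i = gdist V E x y"
  have "i \<in> set [1..<Suc (diameter V E)]"
    using gdist_eq_0_iff[OF assms(2) \<open>x \<in> V\<close> \<open>y \<in> V\<close>] \<open>x \<noteq> y\<close>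
      gdist_le_diameter[OF assms(1) \<open>x \<in> V\<close> \<open>y \<in> V\<close>, of E]
    unfolding i_def by auto
  then have "sum f {w\<in>V. gdist V E x w = i} = sum f {w\<in>V. gdist V E y w = i}"
    using \<open>vstring V E f x = vstring V E f y\<close> unfolding vstring_def map_eq_conv by blast
  then have "{w\<in>V. gdist V E x w = i} = {w\<in>V. gdist V E y w = i}"
    using sums by (auto dest: inj_onD)
  moreover have "y \<in> {w\<in>V. gdist V E x w = i}" using \<open>y \<in> V\<close> i_def by simp
  ultimately have "gdist V E y y = i" by blast
  moreover have "i \<noteq> 0"
    using gdist_eq_0_iff[OF assms(2) \<open>x \<in> V\<close> \<open>y \<in> V\<close>] \<open>x \<noteq> y\<close> i_def by simp
  ultimately show False using gdist_self[OF \<open>y \<in> V\<close>] by simp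
qed

lemma subset_sums_pow2_distinct:
  assumes "finite V" "inj_on g V"
  shows "inj_on (sum (\<lambda>w. (2::real) ^ g w)) (Pow V)"
proof (rule inj_onI)
  have encode: "sum (\<lambda>w. (2::real) ^ g w) A = real (set_encode (g ` A))" if "A \<subseteq> V" for A
    using sum.reindex[OF inj_on_subset[OF assms(2) that], of "(^) (2::nat)"]
    by (simp add: set_encode_def of_nat_sum)
  fix A B assume "A \<in> Pow V" "B \<in> Pow V"
    and "sum (\<lambda>w. (2::real) ^ g w) A = sum (\<lambda>w. (2::real) ^ g w) B"
  then have "set_encode (g ` A) = set_encode (g ` B)" by (simp add: encode)
  then have "g ` A = g ` B"
    using \<open>A \<in> Pow V\<close> \<open>B \<in> Pow V\<close> assms(1) by (auto simp: set_encode_eq finite_subset)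
  then show "A = B" using \<open>A \<in> Pow V\<close> \<open>B \<in> Pow V\<close> assms(2) by (simp add: inj_on_image_eq_iff)
qed

lemma resolving_assignment_exists:
  assumes "finite V" "connected_graph V E"
  shows "\<exists>f. inj_on (vstring V E f) V"
proof -
  obtain g :: "'a \<Rightarrow> nat" where "inj_on g V"
    using finite_imp_inj_to_nat_seg[OF assms(1)] by blast
  then show ?thesis
    using vstring_inj_if_subset_sums_distinct[OF assms subset_sums_pow2_distinct[OF assms(1)]]
    by blast
qed

lemma IDI_attained:
  assumes "finite V" "connected_graph V E"
  obtains f where "card (f ` V) = IDI V E" "inj_on (vstring V E f) V"
proof -
  have "\<exists>k f. card (f ` V) = k \<and> inj_on (vstring V E f) V"
    using resolving_assignment_exists[OF assms] by blast
  then have "\<exists>f. card (f ` V) = IDI V E \<and> inj_on (vstring V E f) V"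
    unfolding IDI_def by (rule LeastI_ex)
  then show ?thesis using that by blast
qed

theorem mainTheorem3:
  fixes V :: "'a set" and E :: "'a \<Rightarrow> 'a \<Rightarrow> bool"
  assumes "simple_graph V E" and "connected_graph V E"
  shows "IDI V E \<ge> max_tuplet V E"
proof -
  have "finite V" using assms(1) unfolding simple_graph_def by blast
  then obtain f where f: "card (f ` V) = IDI V E" "inj_on (vstring V E f) V"
    using IDI_attained assms(2) by blast
  have "card S \<le> IDI V E" if "is_tuplet V E S" for S
  proof -
    have "card S = card (f ` S)"
      using resolving_inj_on_tuplet[OF assms that f(2)] by (simp add: card_image)
    also have "\<dots> \<le> card (f ` V)"
      using that \<open>finite V\<close> unfolding is_tuplet_def by (intro card_mono) auto
    finally show ?thesis using f(1) by simp
  qed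
  then have bounded: "insert 0 {card S | S. is_tuplet V E S} \<subseteq> {..IDI V E}" by auto
  then have "finite (insert 0 {card S | S. is_tuplet V E S})" by (rule finite_subset) simp
  then show ?thesis unfolding max_tuplet_def using bounded by (auto intro: Max.boundedI)
qed

end
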